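(* Consider the equation $x'(t)+p(t)\,x(\tau(t))=0$, $t\ge t_0$, where $p,\tau:[t_0,\infty)\to[0,\infty)$ are continuous, $\tau(t)\le t$ and $\lim_{t\to\infty}\tau(t)=\infty$. Let $\sigma:[t_0,\infty)\to\mathbb{R}$ be continuous and non-decreasing with $\tau(t)\le\sigma(t)\le t$ for $t\ge t_0$. If $$\limsup_{t\to+\infty}\int_{\sigma(t)}^{t}p(s)\exp\Bigg(\int_{\tau(s)}^{\sigma(t)}p(\xi)\exp\bigg(\int_{\tau(\xi)}^{\xi}p(u)\,du\bigg)d\xi\Bigg)ds>1,$$ then all solutions of this equation oscillate.
   Context: A solution is a function $x\in C([T_0,\infty);\mathbb{R})$ for some $T_0\ge t_0$, continuously differentiable on $[\tau_{(-1)}(T_0),\infty)$ where $\tau_{(-1)}(t)=\sup\{s:\tau(s)\le t\}$, satisfying the equation for $t\ge\tau_{(-1)}(T_0)$. It is oscillatory if it has arbitrarily large zeros; "all solutions oscillate" means every solution is oscillatory. *)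

theory Defs
  imports "HOL-Analysis.Analysis"
begin

definition tau_inv :: "real \<Rightarrow> (real \<Rightarrow> real) \<Rightarrow> real \<Rightarrow> real" where
  "tau_inv t0 tau T = Sup {s. t0 \<le> s \<and> tau s \<le> T}"

definition is_solution :: "real \<Rightarrow> (real \<Rightarrow> real) \<Rightarrow> (real \<Rightarrow> real) \<Rightarrow> (real \<Rightarrow> real) \<Rightarrow> bool" where
  "is_solution t0 p tau x \<longleftrightarrow>
     (\<exists>T0 \<ge> t0. continuous_on {T0..} x \<and>
        (\<exists>x'. continuous_on {tau_inv t0 tau T0..} x' \<and>
           (\<forall>t \<ge> tau_inv t0 tau T0.
               (x has_real_derivative x' t) (at t within {tau_inv t0 tau T0..}) \<and>
               x' t + p t * x (tau t) = 0)))"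

definition oscillatory :: "(real \<Rightarrow> real) \<Rightarrow> bool" where
  "oscillatory x \<longleftrightarrow> (\<forall>T. \<exists>t > T. x t = 0)"

end

theory Submission imports Defs begin

text \<open>A nonoscillatory solution \<open>x\<close> may be assumed eventually positive. Then \<open>x\<close> is eventually
  nonincreasing, so \<open>x \<le> x \<circ> \<tau>\<close>, and the integrating factor \<open>exp (\<integral> p)\<close> turns
  \<open>x' + p x = p (x - x \<circ> \<tau>) \<le> 0\<close> into \<open>x \<xi> exp (\<integral>\<^bsub>\<tau> \<xi>\<^esub>\<^bsup>\<xi>\<^esup> p) \<le> x (\<tau> \<xi>)\<close>.
  With \<open>q \<xi> = p \<xi> exp (\<integral>\<^bsub>\<tau> \<xi>\<^esub>\<^bsup>\<xi>\<^esup> p)\<close> this reads \<open>x' + q x \<le> 0\<close>, and the second integrating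
  factor \<open>exp (\<integral> q)\<close> yields \<open>x v exp (\<integral>\<^bsub>u\<^esub>\<^bsup>v\<^esup> q) \<le> x u\<close>. Using this bound for
  \<open>x (\<tau> s) \<ge> x (\<sigma> t) exp (\<integral>\<^bsub>\<tau> s\<^esub>\<^bsup>\<sigma> t\<^esup> q)\<close> when integrating \<open>x' = - p (x \<circ> \<tau>)\<close>
  over \<open>[\<sigma> t, t]\<close> shows that the integral in the criterion is eventually less than \<open>1\<close>.\<close>

lemma has_real_derivative_integral_from:
  fixes f :: "real \<Rightarrow> real"
  assumes "continuous_on {c..} f" "c < u"
  shows "((\<lambda>v. integral {c..v} f) has_real_derivative f u) (at u)"
proof -
  have "continuous_on {c..u+1} f" using assms(1) by (rule continuous_on_subset) auto
  then have "((\<lambda>v. integral {c..v} f) has_real_derivative f u) (at u within {c..u+1})"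
    by (rule integral_has_real_derivative) (use assms(2) in auto)
  moreover have "at u within {c..u+1} = at u" using assms(2) by (intro at_within_Icc_at) auto
  ultimately show ?thesis by simp
qed

lemma integral_Icc_eq_diff:
  fixes f :: "real \<Rightarrow> real"
  assumes "continuous_on {c..} f" "c \<le> a" "a \<le> b"
  shows "integral {a..b} f = integral {c..b} f - integral {c..a} f"
proof -
  have "f integrable_on {c..b}"
    by (rule integrable_continuous_interval, rule continuous_on_subset[OF assms(1)]) auto
  from Henstock_Kurzweil_Integration.integral_combine[OF assms(2,3) this] show ?thesis by simp
qed

lemma continuous_on_integral_between:
  fixes f :: "real \<Rightarrow> real"
  assumes f: "continuous_on {c..} f"
    and \<alpha>: "continuous_on S \<alpha>" and \<beta>: "continuous_on S \<beta>"
    and between: "\<And>s. s \<in> S \<Longrightarrow> c < \<alpha> s \<and> \<alpha> s \<le> \<beta> s"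
  shows "continuous_on S (\<lambda>s. integral {\<alpha> s..\<beta> s} f)"
proof -
  define F where "F v = integral {c..v} f" for v
  have F: "continuous_on {c<..} F"
  proof (intro continuous_at_imp_continuous_on ballI)
    fix u assume "u \<in> {c<..}"
    then have "c < u" by simp
    from DERIV_isCont[OF has_real_derivative_integral_from[OF f this]]
    show "isCont F u" unfolding F_def .
  qed
  have "continuous_on S (\<lambda>s. F (\<alpha> s))"
    by (rule continuous_on_compose2[OF F \<alpha>]) (use between in auto)
  moreover have "continuous_on S (\<lambda>s. F (\<beta> s))"
    by (rule continuous_on_compose2[OF F \<beta>]) (use between in fastforce)
  ultimately have "continuous_on S (\<lambda>s. F (\<beta> s) - F (\<alpha> s))"
    by (rule continuous_on_diff[rotated])
  moreover have "integral {\<alpha> s..\<beta> s} f = F (\<beta> s) - F (\<alpha> s)" if "s \<in> S" for s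
    unfolding F_def by (rule integral_Icc_eq_diff[OF f]) (use between[OF that] in auto)
  ultimately show ?thesis by (metis (no_types, lifting) continuous_on_cong)
qed

lemma integrating_factor_le:
  fixes x x' g :: "real \<Rightarrow> real"
  assumes g: "continuous_on {c..} g" and "c < u" "u \<le> v"
    and x: "\<And>w. u \<le> w \<Longrightarrow> w \<le> v \<Longrightarrow> (x has_real_derivative x' w) (at w)"
    and ineq: "\<And>w. u \<le> w \<Longrightarrow> w \<le> v \<Longrightarrow> x' w + g w * x w \<le> 0"
  shows "x v * exp (integral {u..v} g) \<le> x u"
proof -
  define G where "G w = integral {c..w} g" for w
  have "x v * exp (G v) \<le> x u * exp (G u)"
  proof (rule DERIV_nonpos_imp_nonincreasing[OF \<open>u \<le> v\<close>])
    fix w assume w: "u \<le> w" "w \<le> v"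
    have "DERIV G w :> g w"
      unfolding G_def using has_real_derivative_integral_from[OF g] w \<open>c < u\<close> by simp
    from DERIV_mult[OF x[OF w] DERIV_chain2[OF DERIV_exp this]]
    have "((\<lambda>w. x w * exp (G w)) has_real_derivative exp (G w) * (x' w + g w * x w)) (at w)"
      by (simp add: algebra_simps)
    moreover have "exp (G w) * (x' w + g w * x w) \<le> 0"
      using ineq[OF w] by (simp add: mult_nonneg_nonpos)
    ultimately show "\<exists>y. ((\<lambda>w. x w * exp (G w)) has_real_derivative y) (at w) \<and> y \<le> 0"
      by blast
  qed
  moreover have "integral {u..v} g = G v - G u"
    unfolding G_def by (rule integral_Icc_eq_diff[OF g]) (use \<open>c < u\<close> \<open>u \<le> v\<close> in auto)
  then have "x v * exp (integral {u..v} g) * exp (G u) = x v * exp (G v)"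
    by (simp add: mult.assoc flip: exp_add)
  ultimately show ?thesis by (metis exp_gt_zero mult_le_cancel_right_pos)
qed

lemma integral_less_one_if_le_neg_deriv:
  fixes x x' r :: "real \<Rightarrow> real"
  assumes "c \<le> t" and r: "continuous_on {c..t} r"
    and x: "\<And>s. s \<in> {c..t} \<Longrightarrow> (x has_real_derivative x' s) (at s)"
    and le: "\<And>s. s \<in> {c..t} \<Longrightarrow> x c * r s \<le> - x' s"
    and "0 < x c" "0 < x t"
  shows "integral {c..t} r < 1"
proof -
  have lower: "((\<lambda>s. x c * r s) has_integral x c * integral {c..t} r) {c..t}"
    using r by (intro has_integral_mult_right integrable_integral integrable_continuous_interval)
  have upper: "((\<lambda>s. - x' s) has_integral - (x t - x c)) {c..t}"
    using \<open>c \<le> t\<close> x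
    by (intro has_integral_neg fundamental_theorem_of_calculus)
      (auto simp: has_real_derivative_iff_has_vector_derivative[symmetric]
        intro: has_field_derivative_at_within)
  from has_integral_le[OF lower upper le] \<open>0 < x t\<close> have "x c * integral {c..t} r < x c * 1"
    by simp
  with \<open>0 < x c\<close> show ?thesis by (rule mult_less_cancel_left_pos[THEN iffD1])
qed

lemma continuous_on_nonzero_sign_cases:
  fixes x :: "real \<Rightarrow> real"
  assumes "continuous_on {S..} x" "\<And>t. t \<ge> S \<Longrightarrow> x t \<noteq> 0"
  shows "(\<forall>t\<ge>S. 0 < x t) \<or> (\<forall>t\<ge>S. x t < 0)"
proof (rule ccontr)
  assume "\<not> ?thesis"
  then obtain u v where uv: "u \<ge> S" "v \<ge> S" "x u \<le> 0" "x v \<ge> 0" by force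
  have cont: "continuous_on {min u v..max u v} x"
    using assms(1) by (rule continuous_on_subset) (use uv in auto)
  have "\<exists>z\<ge>min u v. z \<le> max u v \<and> x z = 0"
  proof (cases "u \<le> v")
    case True then show ?thesis using IVT'[of x u 0 v] cont uv by (auto simp: min_def max_def)
  next
    case False then show ?thesis using IVT2'[of x u 0 v] cont uv by (auto simp: min_def max_def)
  qed
  then show False using assms(2) uv by force
qed

lemma filterlim_at_top_obtain_ge:
  fixes \<tau> :: "real \<Rightarrow> real"
  assumes "filterlim \<tau> at_top at_top"
  obtains B where "B \<ge> c" "\<And>t. t \<ge> B \<Longrightarrow> c \<le> \<tau> t"
proof -
  have "eventually (\<lambda>t. c \<le> \<tau> t) at_top" using assms by (simp add: filterlim_at_top)
  then obtain N where "\<And>t. t \<ge> N \<Longrightarrow> c \<le> \<tau> t" by (auto simp: eventually_at_top_linorder)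
  then show thesis by (intro that[of "max N c"]) auto
qed

locale positive_delay_solution =
  fixes p \<tau> x x' :: "real \<Rightarrow> real" and a :: real
  assumes p_cont: "continuous_on {a..} p"
    and p_nonneg: "\<And>t. t \<ge> a \<Longrightarrow> 0 \<le> p t"
    and \<tau>_cont: "continuous_on {a..} \<tau>"
    and \<tau>_le: "\<And>t. t \<ge> a \<Longrightarrow> \<tau> t \<le> t"
    and \<tau>_lim: "filterlim \<tau> at_top at_top"
    and x_deriv: "\<And>t. t \<ge> a \<Longrightarrow> (x has_real_derivative x' t) (at t)"
    and x_equation: "\<And>t. t \<ge> a \<Longrightarrow> x' t = - p t * x (\<tau> t)"
    and x_pos: "\<And>t. t \<ge> a \<Longrightarrow> 0 < x t"
begin

lemma x_antimono_eventually:
  obtains B where "B \<ge> a" "\<And>u v. B \<le> u \<Longrightarrow> u \<le> v \<Longrightarrow> x v \<le> x u"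
proof -
  obtain B where "B \<ge> a" and B: "\<And>t. t \<ge> B \<Longrightarrow> a \<le> \<tau> t" by (elim filterlim_at_top_obtain_ge[OF \<tau>_lim])
  have "x v \<le> x u" if "B \<le> u" "u \<le> v" for u v
  proof (rule DERIV_nonpos_imp_nonincreasing[OF \<open>u \<le> v\<close>])
    fix w assume "u \<le> w" "w \<le> v"
    then have "a \<le> w" "a \<le> \<tau> w" using that \<open>B \<ge> a\<close> B by auto
    then have "x' w \<le> 0"
      using x_equation p_nonneg x_pos by (simp add: less_imp_le)
    with x_deriv[OF \<open>a \<le> w\<close>] show "\<exists>y. (x has_real_derivative y) (at w) \<and> y \<le> 0" by blast
  qed
  with \<open>B \<ge> a\<close> show thesis by (rule that)
qed

lemma x_le_x_delay:
  obtains B where "B \<ge> a" "\<And>t. t \<ge> B \<Longrightarrow> x t \<le> x (\<tau> t)"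
proof -
  obtain B0 where "B0 \<ge> a" and antimono: "\<And>u v. B0 \<le> u \<Longrightarrow> u \<le> v \<Longrightarrow> x v \<le> x u"
    by (elim x_antimono_eventually)
  obtain B where "B \<ge> B0" and B: "\<And>t. t \<ge> B \<Longrightarrow> B0 \<le> \<tau> t" by (elim filterlim_at_top_obtain_ge[OF \<tau>_lim])
  show thesis
  proof (rule that)
    show "B \<ge> a" using \<open>B \<ge> B0\<close> \<open>B0 \<ge> a\<close> by simp
    show "x t \<le> x (\<tau> t)" if "t \<ge> B" for t
      using antimono[OF B[OF that] \<tau>_le] that \<open>B \<ge> B0\<close> \<open>B0 \<ge> a\<close> by simp
  qed
qed

lemma x_exp_le_x_delay:
  obtains B where "B \<ge> a" "\<And>t. t \<ge> B \<Longrightarrow> x t * exp (integral {\<tau> t..t} p) \<le> x (\<tau> t)"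
proof -
  obtain B0 where "B0 \<ge> a" and le: "\<And>t. t \<ge> B0 \<Longrightarrow> x t \<le> x (\<tau> t)" by (elim x_le_x_delay)
  obtain B where "B \<ge> B0 + 1" and B: "\<And>t. t \<ge> B \<Longrightarrow> B0 + 1 \<le> \<tau> t" by (elim filterlim_at_top_obtain_ge[OF \<tau>_lim])
  have "x t * exp (integral {\<tau> t..t} p) \<le> x (\<tau> t)" if "t \<ge> B" for t
  proof (rule integrating_factor_le[OF p_cont])
    show "a < \<tau> t" "\<tau> t \<le> t" using B[OF that] \<tau>_le[of t] that \<open>B0 \<ge> a\<close> \<open>B \<ge> B0 + 1\<close> by auto
    fix w assume "\<tau> t \<le> w" "w \<le> t"
    then have "B0 \<le> w" "a \<le> w" using B[OF that] \<open>B0 \<ge> a\<close> by auto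
    show "(x has_real_derivative x' w) (at w)" using x_deriv[OF \<open>a \<le> w\<close>] .
    have "x' w + p w * x w = p w * (x w - x (\<tau> w))"
      using x_equation[OF \<open>a \<le> w\<close>] by (simp add: algebra_simps)
    then show "x' w + p w * x w \<le> 0"
      using le[OF \<open>B0 \<le> w\<close>] p_nonneg[OF \<open>a \<le> w\<close>] by (simp add: mult_nonneg_nonpos)
  qed
  with \<open>B \<ge> B0 + 1\<close> \<open>B0 \<ge> a\<close> show thesis by (intro that[of B]) auto
qed

definition q :: "real \<Rightarrow> real" where
  "q \<xi> = p \<xi> * exp (integral {\<tau> \<xi>..\<xi>} p)"

lemma continuous_on_q:
  obtains B where "B \<ge> a" "continuous_on {B..} q"
proof -
  obtain B where "B \<ge> a + 1" and B: "\<And>t. t \<ge> B \<Longrightarrow> a + 1 \<le> \<tau> t" by (elim filterlim_at_top_obtain_ge[OF \<tau>_lim])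
  have "{B..} \<subseteq> {a..}" using \<open>B \<ge> a + 1\<close> by auto
  have "continuous_on {B..} (\<lambda>\<xi>. integral {\<tau> \<xi>..\<xi>} p)"
  proof (rule continuous_on_integral_between[OF p_cont])
    show "continuous_on {B..} \<tau>" using \<tau>_cont \<open>{B..} \<subseteq> {a..}\<close> by (rule continuous_on_subset)
    show "a < \<tau> s \<and> \<tau> s \<le> s" if "s \<in> {B..}" for s
      using B[of s] \<tau>_le[of s] that \<open>B \<ge> a + 1\<close> by auto
  qed (rule continuous_on_id)
  then have "continuous_on {B..} q"
    unfolding q_def using continuous_on_subset[OF p_cont \<open>{B..} \<subseteq> {a..}\<close>]
    by (intro continuous_intros)
  with \<open>B \<ge> a + 1\<close> show thesis by (intro that[of B]) auto
qed

lemma x_exp_q_antimono: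
  obtains B where "B \<ge> a" "\<And>u v. B \<le> u \<Longrightarrow> u \<le> v \<Longrightarrow> x v * exp (integral {u..v} q) \<le> x u"
proof -
  obtain Bq where "Bq \<ge> a" and q_cont: "continuous_on {Bq..} q" by (elim continuous_on_q)
  obtain B0 where "B0 \<ge> a" and le: "\<And>t. t \<ge> B0 \<Longrightarrow> x t * exp (integral {\<tau> t..t} p) \<le> x (\<tau> t)"
    by (elim x_exp_le_x_delay)
  define B where "B = max Bq B0 + 1"
  have "x v * exp (integral {u..v} q) \<le> x u" if "B \<le> u" "u \<le> v" for u v
  proof (rule integrating_factor_le[OF q_cont _ \<open>u \<le> v\<close>])
    show "Bq < u" using that unfolding B_def by simp
    fix w assume "u \<le> w" "w \<le> v"
    then have "B0 \<le> w" "a \<le> w" using that \<open>B0 \<ge> a\<close> unfolding B_def by auto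
    show "(x has_real_derivative x' w) (at w)" using x_deriv[OF \<open>a \<le> w\<close>] .
    have "x' w + q w * x w = p w * (x w * exp (integral {\<tau> w..w} p) - x (\<tau> w))"
      using x_equation[OF \<open>a \<le> w\<close>] unfolding q_def by (simp add: algebra_simps)
    then show "x' w + q w * x w \<le> 0"
      using le[OF \<open>B0 \<le> w\<close>] p_nonneg[OF \<open>a \<le> w\<close>] by (simp add: mult_nonneg_nonpos)
  qed
  moreover have "B \<ge> a" using \<open>B0 \<ge> a\<close> unfolding B_def by simp
  ultimately show thesis by (intro that[of B]) auto
qed

lemma integral_criterion_less_one:
  assumes \<sigma>_mono: "mono_on {a..} \<sigma>"
    and \<sigma>_bounds: "\<And>t. t \<ge> a \<Longrightarrow> \<tau> t \<le> \<sigma> t \<and> \<sigma> t \<le> t"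
  shows "eventually (\<lambda>t. integral {\<sigma> t..t} (\<lambda>s. p s * exp (integral {\<tau> s..\<sigma> t} q)) < 1) at_top"
proof -
  obtain Bq where "Bq \<ge> a" and q_cont: "continuous_on {Bq..} q" by (elim continuous_on_q)
  obtain Bx where "Bx \<ge> a"
    and x_q: "\<And>u v. Bx \<le> u \<Longrightarrow> u \<le> v \<Longrightarrow> x v * exp (integral {u..v} q) \<le> x u"
    by (elim x_exp_q_antimono)
  obtain B1 where "B1 \<ge> max Bq Bx + 1" and B1: "\<And>t. t \<ge> B1 \<Longrightarrow> max Bq Bx + 1 \<le> \<tau> t"
    by (elim filterlim_at_top_obtain_ge[OF \<tau>_lim])
  obtain B where "B \<ge> B1" and B: "\<And>t. t \<ge> B \<Longrightarrow> B1 \<le> \<tau> t" by (elim filterlim_at_top_obtain_ge[OF \<tau>_lim])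
  have "integral {\<sigma> t..t} (\<lambda>s. p s * exp (integral {\<tau> s..\<sigma> t} q)) < 1" if "t \<ge> B" for t
  proof -
    define c where "c = \<sigma> t"
    define r where "r s = p s * exp (integral {\<tau> s..c} q)" for s
    have "a \<le> B1" using \<open>B1 \<ge> max Bq Bx + 1\<close> \<open>Bx \<ge> a\<close> by auto
    then have "B1 \<le> c" "c \<le> t"
      using B[OF that] \<sigma>_bounds[of t] that \<open>B \<ge> B1\<close> unfolding c_def by force+
    have "{c..t} \<subseteq> {a..}" using \<open>a \<le> B1\<close> \<open>B1 \<le> c\<close> by auto
    have delay: "Bq < \<tau> s" "Bx \<le> \<tau> s" "\<tau> s \<le> c" if "s \<in> {c..t}" for s
    proof -
      show "Bq < \<tau> s" "Bx \<le> \<tau> s" using B1[of s] that \<open>B1 \<le> c\<close> by auto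
      have "\<tau> s \<le> \<sigma> s" using \<sigma>_bounds[of s] that \<open>{c..t} \<subseteq> {a..}\<close> by auto
      also have "\<sigma> s \<le> \<sigma> t"
        using mono_onD[OF \<sigma>_mono] that \<open>{c..t} \<subseteq> {a..}\<close> \<open>c \<le> t\<close> by auto
      finally show "\<tau> s \<le> c" unfolding c_def .
    qed
    have "continuous_on {c..t} (\<lambda>s. integral {\<tau> s..c} q)"
      using delay by (intro continuous_on_integral_between[OF q_cont]
          continuous_on_subset[OF \<tau>_cont \<open>{c..t} \<subseteq> {a..}\<close>] continuous_on_const) auto
    then have r_cont: "continuous_on {c..t} r"
      unfolding r_def using continuous_on_subset[OF p_cont \<open>{c..t} \<subseteq> {a..}\<close>]
      by (intro continuous_intros)
    have le: "x c * r s \<le> - x' s" if "s \<in> {c..t}" for s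
    proof -
      have "x c * exp (integral {\<tau> s..c} q) \<le> x (\<tau> s)" using x_q delay[OF that] by simp
      then have "p s * (x c * exp (integral {\<tau> s..c} q)) \<le> p s * x (\<tau> s)"
        using p_nonneg that \<open>{c..t} \<subseteq> {a..}\<close> by (auto intro: mult_left_mono)
      then show ?thesis using x_equation that \<open>{c..t} \<subseteq> {a..}\<close> unfolding r_def by (auto simp: ac_simps)
    qed
    have deriv: "(x has_real_derivative x' s) (at s)" if "s \<in> {c..t}" for s
      using x_deriv that \<open>{c..t} \<subseteq> {a..}\<close> by auto
    have "0 < x c" "0 < x t" using x_pos \<open>a \<le> B1\<close> \<open>B1 \<le> c\<close> \<open>c \<le> t\<close> by auto
    with integral_less_one_if_le_neg_deriv[OF \<open>c \<le> t\<close> r_cont deriv le]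
    have "integral {c..t} r < 1" by blast
    then show ?thesis unfolding r_def[abs_def] c_def .
  qed
  then show ?thesis unfolding eventually_at_top_linorder by blast
qed

end

lemma nonoscillatory_solution_eventually_positive:
  assumes sol: "is_solution t0 p \<tau> x" and nonosc: "\<not> oscillatory x"
  obtains a y y' where "a \<ge> t0"
    "\<And>t. t \<ge> a \<Longrightarrow> (y has_real_derivative y' t) (at t)"
    "\<And>t. t \<ge> a \<Longrightarrow> y' t = - p t * y (\<tau> t)"
    "\<And>t. t \<ge> a \<Longrightarrow> 0 < y t"
proof -
  from nonosc obtain T where T: "\<And>t. t > T \<Longrightarrow> x t \<noteq> 0" unfolding oscillatory_def by auto
  from sol obtain T0 x' where "T0 \<ge> t0" and x_cont: "continuous_on {T0..} x"
    and x_sol: "\<And>t. t \<ge> tau_inv t0 \<tau> T0 \<Longrightarrow>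
       (x has_real_derivative x' t) (at t within {tau_inv t0 \<tau> T0..}) \<and> x' t + p t * x (\<tau> t) = 0"
    unfolding is_solution_def by blast
  define a where "a = max (max T T0) (tau_inv t0 \<tau> T0) + 1"
  have "a \<ge> t0" using \<open>T0 \<ge> t0\<close> unfolding a_def by simp
  have x_deriv: "(x has_real_derivative x' t) (at t)" and x_equation: "x' t = - p t * x (\<tau> t)"
    if "t \<ge> a" for t
  proof -
    have "at t within {tau_inv t0 \<tau> T0..} = at t"
      using that unfolding a_def by (intro at_within_open_subset[of _ "{tau_inv t0 \<tau> T0<..}"]) auto
    with x_sol[of t] that show "(x has_real_derivative x' t) (at t)" "x' t = - p t * x (\<tau> t)"
      unfolding a_def by (auto simp: eq_neg_iff_add_eq_0)
  qed
  have "(\<forall>t\<ge>a. 0 < x t) \<or> (\<forall>t\<ge>a. x t < 0)"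
  proof (rule continuous_on_nonzero_sign_cases)
    show "continuous_on {a..} x" using x_cont by (rule continuous_on_subset) (auto simp: a_def)
    show "x t \<noteq> 0" if "t \<ge> a" for t using T that unfolding a_def by auto
  qed
  then show thesis
  proof
    assume "\<forall>t\<ge>a. 0 < x t"
    with \<open>a \<ge> t0\<close> x_deriv x_equation show thesis by (intro that[of a x x']) auto
  next
    assume "\<forall>t\<ge>a. x t < 0"
    moreover have "((\<lambda>t. - x t) has_real_derivative - x' t) (at t)" if "t \<ge> a" for t
      using x_deriv[OF that] by (rule DERIV_minus)
    ultimately show thesis using \<open>a \<ge> t0\<close> x_equation
      by (intro that[of a "\<lambda>t. - x t" "\<lambda>t. - x' t"]) auto
  qed
qed

theorem corollary3p1:
  fixes t0 :: real and p tau sigma :: "real \<Rightarrow> real"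
  assumes p_cont: "continuous_on {t0..} p"
    and p_nonneg: "\<And>t. t \<ge> t0 \<Longrightarrow> p t \<ge> 0"
    and tau_cont: "continuous_on {t0..} tau"
    and tau_nonneg: "\<And>t. t \<ge> t0 \<Longrightarrow> tau t \<ge> 0"
    and tau_le: "\<And>t. t \<ge> t0 \<Longrightarrow> tau t \<le> t"
    and tau_lim: "filterlim tau at_top at_top"
    and sigma_cont: "continuous_on {t0..} sigma"
    and sigma_mono: "mono_on {t0..} sigma"
    and sigma_bounds: "\<And>t. t \<ge> t0 \<Longrightarrow> tau t \<le> sigma t \<and> sigma t \<le> t"
    and cond: "Limsup at_top (\<lambda>t. ereal (integral {sigma t..t}
                 (\<lambda>s. p s * exp (integral {tau s..sigma t}
                    (\<lambda>\<xi>. p \<xi> * exp (integral {tau \<xi>..\<xi>} p)))))) > 1"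
  shows "\<forall>x. is_solution t0 p tau x \<longrightarrow> oscillatory x"
proof (intro allI impI)
  fix x assume sol: "is_solution t0 p tau x"
  show "oscillatory x"
  proof (rule ccontr)
    assume "\<not> oscillatory x"
    with sol obtain a y y' where "a \<ge> t0" and y:
      "\<And>t. t \<ge> a \<Longrightarrow> (y has_real_derivative y' t) (at t)"
      "\<And>t. t \<ge> a \<Longrightarrow> y' t = - p t * y (tau t)" "\<And>t. t \<ge> a \<Longrightarrow> 0 < y t"
      using nonoscillatory_solution_eventually_positive by blast
    then have "{a..} \<subseteq> {t0..}" by auto
    interpret positive_delay_solution p tau y y' a
      using continuous_on_subset[OF p_cont \<open>{a..} \<subseteq> {t0..}\<close>]
        continuous_on_subset[OF tau_cont \<open>{a..} \<subseteq> {t0..}\<close>] p_nonneg tau_le tau_lim y \<open>a \<ge> t0\<close>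
      by unfold_locales auto
    have "eventually (\<lambda>t. integral {sigma t..t} (\<lambda>s. p s * exp (integral {tau s..sigma t} q)) < 1) at_top"
      using mono_on_subset[OF sigma_mono \<open>{a..} \<subseteq> {t0..}\<close>] sigma_bounds \<open>a \<ge> t0\<close>
      by (intro integral_criterion_less_one) auto
    then have "Limsup at_top (\<lambda>t. ereal (integral {sigma t..t}
                 (\<lambda>s. p s * exp (integral {tau s..sigma t}
                    (\<lambda>\<xi>. p \<xi> * exp (integral {tau \<xi>..\<xi>} p)))))) \<le> 1"
      unfolding q_def[abs_def] by (intro Limsup_bounded) (auto elim: eventually_mono)
    with cond show False by simp
  qed
qed

end
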